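(* Let $2\le n\le\infty$, $r\ge 0$, $p,q\in\mathbb Z$ and let $A$ be an $n$-multicomplex. Then the map $\pi_r\colon ZW_r^{p,q}(A)\to E_r^{p,q}(A)$, defined as the composite of $z_r\colon ZW_r^{p,q}(A)\to Z_r^{p,q}(A)$ (where $z_0=\mathrm{id}$ and $z_r(a_0,\dots,a_{r-1})=a_0$ for $r\ge1$) with the quotient map $Z_r^{p,q}(A)\to E_r^{p,q}(A)$, is surjective and satisfies $\ker\pi_r=\operatorname{im} w_r$, where $w_r\colon BW_r^{p,q-1}(A)\to ZW_r^{p,q}(A)$. Moreover $z_r\circ w_r=\beta_r$ lands in $B^{p,q}_r(A)$, where $\beta_0=0$, $\beta_1=d_0$ and for $r\ge2$, $\beta_r(b_0,\dots,b_{r-2};a;c_0,\dots,c_{r-2})=d_0a+\sum_{i=1}^{r-1}(-1)^id_ib_{r-1-i}$. Hence $E_r^{p,q}(A)\cong ZW_r^{p,q}(A)/w_r(BW_r^{p,q-1}(A))$, naturally in $A$, and under this isomorphism the differential $\Delta_r$ of $E_r$ corresponds to the well-defined map \[ [(a_0,\dots,a_{r-1})]\longmapsto \Big[\Big(\sum_{i=1}^r(-1)^id_{i+k}a_{r-i}\Big)_{k=0,\dots,r-1}\Big] \] from $ZW_r^{p,q}(A)/w_r(BW_r^{p,q-1}(A))$ to $ZW_r^{p-r,q+1-r}(A)/w_r(BW_r^{p-r,q-r}(A))$.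
   Context: Throughout, $R$ is a commutative unital ring. For $1\le n\le\infty$, an $n$-multicomplex is a $\mathbb Z\times\mathbb Z$-bigraded $R$-module $A=\{A^{p,q}\}$ with $R$-linear maps $d_i\colon A\to A$ ($i\ge0$) of bidegree $(-i,1-i)$ such that $\sum_{i+j=l}(-1)^id_id_j=0$ for all $l\ge0$, and $d_i=0$ for all $i\ge n$ (no vanishing condition when $n=\infty$). Morphisms are bidegree $(0,0)$ $R$-linear maps commuting with all $d_i$; the category is denoted $\mathrm{Ch}_n$. Spectral sequence: $Z_0^{p,q}(A)=A^{p,q}$; for $r\ge1$, $Z_r^{p,q}(A)$ is the set of $a_0\in A^{p,q}$ for which there exist $a_j\in A^{p-j,q-j}$ ($1\le j\le r-1$) with $\sum_{i+j=l}(-1)^id_ia_j=0$ for $0\le l\le r-1$. $B_0^{p,q}(A)=0$, $B_1^{p,q}(A)=A^{p,q}\cap\operatorname{im}d_0$, and for $r\ge2$, $B_r^{p,q}(A)$ is the set of $x\in A^{p,q}$ for which there exist $b_i\in A^{p+r-1-i,q+r-2-i}$ ($0\le i\le r-1$) with $x=\sum_{i=0}^{r-1}(-1)^id_ib_{r-1-i}$ and $\sum_{i=0}^l(-1)^id_ib_{l-i}=0$ for $0\le l\le r-2$. Then $E_r^{p,q}(A)=Z_r^{p,q}(A)/B_r^{p,q}(A)$ with differential $\Delta_r[a_0]=[\sum_{i=1}^r(-1)^id_ia_{r-i}]$ (with $a_j$ as in the definition of $Z_r$). Witness cycles: $ZW_0^{p,q}(A)=A^{p,q}$; for $r\ge1$,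 $ZW_r^{p,q}(A)$ is the $R$-module of tuples $(a_0,\dots,a_{r-1})$ with $a_i\in A^{p-i,q-i}$ and $\sum_{i+j=l}(-1)^id_ia_j=0$ for $0\le l\le r-1$. Witness boundaries: $BW_0^{p,q-1}(A)=0$, $BW_1^{p,q-1}(A)=A^{p,q-1}$, and for $r\ge2$, $BW_r^{p,q-1}(A)=ZW_{r-1}^{p+r-1,q+r-2}(A)\oplus A^{p,q-1}\oplus ZW_{r-1}^{p-1,q-1}(A)$, with elements written $(b_0,\dots,b_{r-2};a;c_0,\dots,c_{r-2})$. The map $w_r\colon BW_r^{p,q-1}(A)\to ZW_r^{p,q}(A)$ is $w_0=0$, $w_1=d_0$, and for $r\ge2$ its $j$-th component ($0\le j\le r-1$) is \[ w_r(\underline b;a;\underline c)_j=d_ja+(-1)^j\sum_{i=j+1}^{r+j-1}(-1)^id_ib_{r+j-1-i}+c_{j-1},\qquad c_{-1}:=0. \] *)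

theory Defs
  imports Complex_Main "HOL-Library.Extended_Nat"
begin

(* A bigraded R-module A = {A^{p,q}} is given by an ambient R-module (type 'a,
   scalar multiplication scale) together with a family of submodules
   A p q :: 'a set.  A map d_i of bidegree (-i,1-i) is given degreewise:
   d i p q : A^{p,q} -> A^{p-i,q+1-i}.  Tuples (a_0,...,a_{r-1}) are encoded as
   functions nat => 'a that vanish from index max r 1 on; ZW_0 = A^{p,q} is
   encoded as the tuples (a_0) with a_0 in A^{p,q}. *)

definition sg :: "nat \<Rightarrow> 'a::ab_group_add \<Rightarrow> 'a" where
  "sg i x = (if even i then x else - x)"

definition multicomplex ::
  "('r::comm_ring_1 \<Rightarrow> 'a::ab_group_add \<Rightarrow> 'a) \<Rightarrow> enat \<Rightarrow> (int \<Rightarrow> int \<Rightarrow> 'a set)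
   \<Rightarrow> (nat \<Rightarrow> int \<Rightarrow> int \<Rightarrow> 'a \<Rightarrow> 'a) \<Rightarrow> bool" where
  "multicomplex scale n A d \<longleftrightarrow>
     module scale \<and>
     (\<forall>p q. module.subspace scale (A p q)) \<and>
     (\<forall>i p q x. x \<in> A p q \<longrightarrow> d i p q x \<in> A (p - int i) (q + 1 - int i)) \<and>
     (\<forall>i p q x y. x \<in> A p q \<longrightarrow> y \<in> A p q \<longrightarrow> d i p q (x + y) = d i p q x + d i p q y) \<and>
     (\<forall>i p q c x. x \<in> A p q \<longrightarrow> d i p q (scale c x) = scale c (d i p q x)) \<and>
     (\<forall>l p q x. x \<in> A p q \<longrightarrow>
        (\<Sum>i\<le>l. sg i (d i (p - int (l - i)) (q + 1 - int (l - i)) (d (l - i) p q x))) = 0) \<and>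
     (\<forall>i p q x. enat i \<ge> n \<longrightarrow> x \<in> A p q \<longrightarrow> d i p q x = 0)"

definition mc_morphism ::
  "('r::comm_ring_1 \<Rightarrow> 'a::ab_group_add \<Rightarrow> 'a) \<Rightarrow> (int \<Rightarrow> int \<Rightarrow> 'a set) \<Rightarrow> (nat \<Rightarrow> int \<Rightarrow> int \<Rightarrow> 'a \<Rightarrow> 'a)
   \<Rightarrow> ('r \<Rightarrow> 'b::ab_group_add \<Rightarrow> 'b) \<Rightarrow> (int \<Rightarrow> int \<Rightarrow> 'b set) \<Rightarrow> (nat \<Rightarrow> int \<Rightarrow> int \<Rightarrow> 'b \<Rightarrow> 'b)
   \<Rightarrow> (int \<Rightarrow> int \<Rightarrow> 'a \<Rightarrow> 'b) \<Rightarrow> bool" where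
  "mc_morphism scale A d scale' A' d' f \<longleftrightarrow>
     (\<forall>p q x. x \<in> A p q \<longrightarrow> f p q x \<in> A' p q) \<and>
     (\<forall>p q x y. x \<in> A p q \<longrightarrow> y \<in> A p q \<longrightarrow> f p q (x + y) = f p q x + f p q y) \<and>
     (\<forall>p q c x. x \<in> A p q \<longrightarrow> f p q (scale c x) = scale' c (f p q x)) \<and>
     (\<forall>i p q x. x \<in> A p q \<longrightarrow> f (p - int i) (q + 1 - int i) (d i p q x) = d' i p q (f p q x))"

definition Zr :: "(int \<Rightarrow> int \<Rightarrow> 'a::ab_group_add set) \<Rightarrow> (nat \<Rightarrow> int \<Rightarrow> int \<Rightarrow> 'a \<Rightarrow> 'a)
                   \<Rightarrow> nat \<Rightarrow> int \<Rightarrow> int \<Rightarrow> 'a set" where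
  "Zr A d r p q = (if r = 0 then A p q else
     {a0 \<in> A p q. \<exists>a. a 0 = a0 \<and> (\<forall>j\<in>{1..r-1}. a j \<in> A (p - int j) (q - int j)) \<and>
        (\<forall>l<r. (\<Sum>i\<le>l. sg i (d i (p - int (l - i)) (q - int (l - i)) (a (l - i)))) = 0)})"

definition Br :: "(int \<Rightarrow> int \<Rightarrow> 'a::ab_group_add set) \<Rightarrow> (nat \<Rightarrow> int \<Rightarrow> int \<Rightarrow> 'a \<Rightarrow> 'a)
                   \<Rightarrow> nat \<Rightarrow> int \<Rightarrow> int \<Rightarrow> 'a set" where
  "Br A d r p q = (if r = 0 then {0} else
     {x \<in> A p q. \<exists>b. (\<forall>i<r. b i \<in> A (p + int r - 1 - int i) (q + int r - 2 - int i)) \<and>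
        x = (\<Sum>i<r. sg i (d i (p + int i) (q + int i - 1) (b (r - 1 - i)))) \<and>
        (\<forall>l. l + 2 \<le> r \<longrightarrow>
           (\<Sum>i\<le>l. sg i (d i (p + int r - 1 - int l + int i) (q + int r - 2 - int l + int i) (b (l - i)))) = 0)})"

definition ecl :: "(int \<Rightarrow> int \<Rightarrow> 'a::ab_group_add set) \<Rightarrow> (nat \<Rightarrow> int \<Rightarrow> int \<Rightarrow> 'a \<Rightarrow> 'a)
                   \<Rightarrow> nat \<Rightarrow> int \<Rightarrow> int \<Rightarrow> 'a \<Rightarrow> 'a set" where
  "ecl A d r p q z = (\<lambda>b. z + b) ` Br A d r p q"

definition Er :: "(int \<Rightarrow> int \<Rightarrow> 'a::ab_group_add set) \<Rightarrow> (nat \<Rightarrow> int \<Rightarrow> int \<Rightarrow> 'a \<Rightarrow> 'a)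
                   \<Rightarrow> nat \<Rightarrow> int \<Rightarrow> int \<Rightarrow> 'a set set" where
  "Er A d r p q = ecl A d r p q ` Zr A d r p q"

definition ZW :: "(int \<Rightarrow> int \<Rightarrow> 'a::ab_group_add set) \<Rightarrow> (nat \<Rightarrow> int \<Rightarrow> int \<Rightarrow> 'a \<Rightarrow> 'a)
                   \<Rightarrow> nat \<Rightarrow> int \<Rightarrow> int \<Rightarrow> (nat \<Rightarrow> 'a) set" where
  "ZW A d r p q = {a. (\<forall>i < max r 1. a i \<in> A (p - int i) (q - int i)) \<and>
                      (\<forall>i. max r 1 \<le> i \<longrightarrow> a i = 0) \<and>
                      (\<forall>l<r. (\<Sum>i\<le>l. sg i (d i (p - int (l - i)) (q - int (l - i)) (a (l - i)))) = 0)}"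

definition Delta :: "(int \<Rightarrow> int \<Rightarrow> 'a::ab_group_add set) \<Rightarrow> (nat \<Rightarrow> int \<Rightarrow> int \<Rightarrow> 'a \<Rightarrow> 'a)
                   \<Rightarrow> nat \<Rightarrow> int \<Rightarrow> int \<Rightarrow> 'a set \<Rightarrow> 'a set" where
  "Delta A d r p q X = (let a = (SOME a. a \<in> ZW A d r p q \<and> a 0 \<in> X) in
     ecl A d r (p - int r) (q + 1 - int r)
       (\<Sum>i\<in>{1..r}. sg i (d i (p - int (r - i)) (q - int (r - i)) (a (r - i)))))"

text \<open>BW_r^{p,q}(A) (witness boundaries), elements (b, a, c); for r \<le> 1 the unused
  components are 0.  Note: the paper's BW_r^{p,q-1} is BW A d r p (q - 1).\<close>
definition BW :: "(int \<Rightarrow> int \<Rightarrow> 'a::ab_group_add set) \<Rightarrow> (nat \<Rightarrow> int \<Rightarrow> int \<Rightarrow> 'a \<Rightarrow> 'a)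
                   \<Rightarrow> nat \<Rightarrow> int \<Rightarrow> int \<Rightarrow> ((nat \<Rightarrow> 'a) \<times> 'a \<times> (nat \<Rightarrow> 'a)) set" where
  "BW A d r p q = {(b, a, c).
     (if r = 0 then b = (\<lambda>_. 0) \<and> a = 0 \<and> c = (\<lambda>_. 0)
      else if r = 1 then b = (\<lambda>_. 0) \<and> a \<in> A p q \<and> c = (\<lambda>_. 0)
      else b \<in> ZW A d (r - 1) (p + int r - 1) (q + int r - 1) \<and> a \<in> A p q \<and>
           c \<in> ZW A d (r - 1) (p - 1) q)}"

definition w :: "(int \<Rightarrow> int \<Rightarrow> 'a::ab_group_add set) \<Rightarrow> (nat \<Rightarrow> int \<Rightarrow> int \<Rightarrow> 'a \<Rightarrow> 'a)
                   \<Rightarrow> nat \<Rightarrow> int \<Rightarrow> int \<Rightarrow> (nat \<Rightarrow> 'a) \<times> 'a \<times> (nat \<Rightarrow> 'a) \<Rightarrow> nat \<Rightarrow> 'a" where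
  "w A d r p q x j = (case x of (b, a, c) \<Rightarrow>
     (if r = 0 then 0
      else if r = 1 then (if j = 0 then d 0 p (q - 1) a else 0)
      else if j < r then
        d j p (q - 1) a
        + sg j (\<Sum>i\<in>{j+1..r+j-1}. sg i (d i (p - int j + int i) (q - 1 - int j + int i) (b (r + j - 1 - i))))
        + (if j = 0 then 0 else c (j - 1))
      else 0))"

definition zr :: "(nat \<Rightarrow> 'a) \<Rightarrow> 'a" where
  "zr a = a 0"

definition pi_r :: "(int \<Rightarrow> int \<Rightarrow> 'a::ab_group_add set) \<Rightarrow> (nat \<Rightarrow> int \<Rightarrow> int \<Rightarrow> 'a \<Rightarrow> 'a)
                   \<Rightarrow> nat \<Rightarrow> int \<Rightarrow> int \<Rightarrow> (nat \<Rightarrow> 'a) \<Rightarrow> 'a set" where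
  "pi_r A d r p q a = ecl A d r p q (zr a)"

definition beta :: "(nat \<Rightarrow> int \<Rightarrow> int \<Rightarrow> 'a::ab_group_add \<Rightarrow> 'a)
                   \<Rightarrow> nat \<Rightarrow> int \<Rightarrow> int \<Rightarrow> (nat \<Rightarrow> 'a) \<times> 'a \<times> (nat \<Rightarrow> 'a) \<Rightarrow> 'a" where
  "beta d r p q x = (case x of (b, a, c) \<Rightarrow>
     (if r = 0 then 0
      else if r = 1 then d 0 p (q - 1) a
      else d 0 p (q - 1) a + (\<Sum>i\<in>{1..r-1}. sg i (d i (p + int i) (q - 1 + int i) (b (r - 1 - i))))))"

definition delta :: "(nat \<Rightarrow> int \<Rightarrow> int \<Rightarrow> 'a::ab_group_add \<Rightarrow> 'a)
                   \<Rightarrow> nat \<Rightarrow> int \<Rightarrow> int \<Rightarrow> (nat \<Rightarrow> 'a) \<Rightarrow> nat \<Rightarrow> 'a" where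
  "delta d r p q a k = (if k < r then
     (\<Sum>i\<in>{1..r}. sg i (d (i + k) (p - int r + int i) (q - int r + int i) (a (r - i))))
     else 0)"

definition ZWmap :: "(int \<Rightarrow> int \<Rightarrow> 'a \<Rightarrow> 'b::zero) \<Rightarrow> nat \<Rightarrow> int \<Rightarrow> int \<Rightarrow> (nat \<Rightarrow> 'a) \<Rightarrow> nat \<Rightarrow> 'b" where
  "ZWmap f r p q a k = (if k < max r 1 then f (p - int k) (q - int k) (a k) else 0)"

definition Emap :: "(int \<Rightarrow> int \<Rightarrow> 'b::ab_group_add set) \<Rightarrow> (nat \<Rightarrow> int \<Rightarrow> int \<Rightarrow> 'b \<Rightarrow> 'b)
                   \<Rightarrow> (int \<Rightarrow> int \<Rightarrow> 'a \<Rightarrow> 'b) \<Rightarrow> nat \<Rightarrow> int \<Rightarrow> int \<Rightarrow> 'a set \<Rightarrow> 'b set" where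
  "Emap A' d' f r p q X = ecl A' d' r p q (f p q (SOME z. z \<in> X))"

end

theory Submission
  imports Defs
begin

text \<open>
  For a sequence s with s_j in bidegree (P - j, Q - j) write
  D(s)_l = \<Sum>_{i \<le> l} (-1)^i d_i s_{l-i}.
  Everything else rests on one consequence of \<Sum>_{i+j=l} (-1)^i d_i d_j = 0: if s_0, ..., s_{R-1}
  satisfy the first R cycle equations, then the truncated tail (\<Sum>_{m<R} (-1)^{R-m} d_{R-m+j} s_m)_j
  of D(s) is again a D-cycle. For the b-part of a witness boundary this says that w_r lands in ZW_r;
  for a witness cycle it says that the map \<delta> representing \<Delta>_r preserves ZW_r.
  Conversely, if a_0 \<in> B_r is witnessed by b, then a minus the w_r-image of
  (b_0, ..., b_{r-2}; b_{r-1}; 0) vanishes in degree 0, and shifting it back by one index gives the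
  missing cycle c; this identifies the kernel of \<pi>_r with the image of w_r.
\<close>

lemma sg_0 [simp]: "sg 0 x = x"
  by (simp add: sg_def)

lemma sg_zero [simp]: "sg i 0 = 0"
  by (simp add: sg_def)

lemma sg_add: "sg i (x + y) = sg i x + sg i y"
  by (simp add: sg_def)

lemma sg_minus: "sg i (- x) = - sg i x"
  by (simp add: sg_def)

lemma sg_diff: "sg i (x - y) = sg i x - sg i y"
  by (simp add: sg_def)

lemma sg_sg: "sg i (sg j x) = sg (i + j) x"
  by (simp add: sg_def)

lemma sg_sg_same [simp]: "sg i (sg i x) = x"
  by (simp add: sg_def)

lemma sg_sum: "sg i (sum f S) = (\<Sum>x\<in>S. sg i (f x))"
  by (simp add: sg_def sum_negf)

lemma sg_cong_parity: "even i = even j \<Longrightarrow> sg i x = sg j x"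
  by (simp add: sg_def)

lemma sum_atMost_add_split:
  fixes f :: "nat \<Rightarrow> 'a::comm_monoid_add"
  shows "(\<Sum>i\<le>l + s. f i) = (\<Sum>i\<le>l. f i) + (\<Sum>k<s. f (l + s - k))"
proof -
  have "(\<Sum>i\<le>l + s. f i) = (\<Sum>i\<le>l. f i) + (\<Sum>i\<in>{l<..l+s}. f i)"
    by (subst sum.union_disjoint[symmetric]) (auto intro: sum.cong)
  also have "(\<Sum>i\<in>{l<..l+s}. f i) = (\<Sum>k<s. f (l + s - k))"
    by (rule sum.reindex_bij_witness[where i="\<lambda>k. l + s - k" and j="\<lambda>i. l + s - i"]) auto
  finally show ?thesis .
qed

lemma sum_triangle_swap:
  fixes T :: "nat \<Rightarrow> nat \<Rightarrow> 'a::comm_monoid_add"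
  shows "(\<Sum>m<R. \<Sum>k<R - m. T m k) = (\<Sum>t<R. \<Sum>k\<le>t. T (t - k) k)"
proof -
  have "(\<Sum>m<R. \<Sum>k<R - m. T m k) = (\<Sum>(k, m)\<in>{(i, j). i + j < R}. T m k)"
    by (simp add: sum.Sigma)
       (rule sum.reindex_bij_witness[where i="\<lambda>(k, m). (m, k)" and j="\<lambda>(m, k). (k, m)"]; auto)
  also have "\<dots> = (\<Sum>t<R. \<Sum>k\<le>t. T (t - k) k)"
    by (rule sum.triangle_reindex)
  finally show ?thesis .
qed

definition shift_seq :: "(nat \<Rightarrow> 'a::zero) \<Rightarrow> nat \<Rightarrow> 'a" where
  "shift_seq c j = (if j = 0 then 0 else c (j - 1))"

locale mcomplex =
  fixes scale :: "'r::comm_ring_1 \<Rightarrow> 'a::ab_group_add \<Rightarrow> 'a" and n :: enat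
    and A :: "int \<Rightarrow> int \<Rightarrow> 'a set" and d :: "nat \<Rightarrow> int \<Rightarrow> int \<Rightarrow> 'a \<Rightarrow> 'a"
  assumes multicomplex: "multicomplex scale n A d"
begin

lemma subspace_A: "module.subspace scale (A p q)"
  using multicomplex by (simp add: multicomplex_def)

lemma module_scale: "module scale"
  using multicomplex by (simp add: multicomplex_def)

lemma A_zero [simp, intro]: "0 \<in> A p q"
  using module.subspace_0[OF module_scale subspace_A] .

lemma A_add [intro]: "x \<in> A p q \<Longrightarrow> y \<in> A p q \<Longrightarrow> x + y \<in> A p q"
  using module.subspace_add[OF module_scale subspace_A] .

lemma A_minus [intro]: "x \<in> A p q \<Longrightarrow> - x \<in> A p q"
  using module.subspace_neg[OF module_scale subspace_A] .

lemma A_diff [intro]: "x \<in> A p q \<Longrightarrow> y \<in> A p q \<Longrightarrow> x - y \<in> A p q"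
  using module.subspace_diff[OF module_scale subspace_A] .

lemma A_sum [intro]: "(\<And>x. x \<in> S \<Longrightarrow> f x \<in> A p q) \<Longrightarrow> sum f S \<in> A p q"
  using module.subspace_sum[OF module_scale subspace_A] by blast

lemma A_sg [intro]: "x \<in> A p q \<Longrightarrow> sg i x \<in> A p q"
  by (simp add: sg_def A_minus)

lemma d_mem: "x \<in> A p q \<Longrightarrow> p' = p - int i \<Longrightarrow> q' = q + 1 - int i \<Longrightarrow> d i p q x \<in> A p' q'"
  using multicomplex by (simp add: multicomplex_def)

lemma d_add: "x \<in> A p q \<Longrightarrow> y \<in> A p q \<Longrightarrow> d i p q (x + y) = d i p q x + d i p q y"
  using multicomplex by (simp add: multicomplex_def)

lemma d_zero [simp]: "d i p q 0 = 0"
  using d_add[of 0 p q 0 i] by simp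

lemma d_minus: "x \<in> A p q \<Longrightarrow> d i p q (- x) = - d i p q x"
  by (metis A_minus add.right_inverse d_add d_zero minus_unique)

lemma d_diff: "x \<in> A p q \<Longrightarrow> y \<in> A p q \<Longrightarrow> d i p q (x - y) = d i p q x - d i p q y"
  using d_add[of x p q "- y" i] d_minus[of y p q i] by (simp add: A_minus)

lemma d_sg: "x \<in> A p q \<Longrightarrow> d i p q (sg j x) = sg j (d i p q x)"
  by (simp add: sg_def d_minus)

lemma d_sum:
  "finite S \<Longrightarrow> (\<And>x. x \<in> S \<Longrightarrow> f x \<in> A p q) \<Longrightarrow> d i p q (sum f S) = (\<Sum>x\<in>S. d i p q (f x))"
  by (induction S rule: finite_induct) (simp_all add: d_add A_sum)

lemma d_d_sum: "x \<in> A p q \<Longrightarrow>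
   (\<Sum>i\<le>l. sg i (d i (p - int (l - i)) (q + 1 - int (l - i)) (d (l - i) p q x))) = 0"
  using multicomplex by (simp add: multicomplex_def)

lemma d_d_sum_prefix:
  assumes "x \<in> A p q"
  shows "(\<Sum>i\<le>l. sg s (sg i (d i (p - int (l + s - i)) (q + 1 - int (l + s - i)) (d (l + s - i) p q x))))
    = - (\<Sum>k<s. sg (l + k) (d (l + s - k) (p - int k) (q + 1 - int k) (d k p q x)))"
proof -
  let ?f = "\<lambda>i. sg i (d i (p - int (l + s - i)) (q + 1 - int (l + s - i)) (d (l + s - i) p q x))"
  let ?g = "\<lambda>k. sg (l + k) (d (l + s - k) (p - int k) (q + 1 - int k) (d k p q x))"
  have "0 = (\<Sum>i\<le>l + s. ?f i)"
    by (rule d_d_sum[OF assms, symmetric])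
  also have "\<dots> = (\<Sum>i\<le>l. ?f i) + (\<Sum>k<s. ?f (l + s - k))"
    by (rule sum_atMost_add_split)
  also have "(\<Sum>k<s. ?f (l + s - k)) = (\<Sum>k<s. sg s (?g k))"
  proof (intro sum.cong refl)
    fix k assume k: "k \<in> {..<s}"
    then have e: "l + s - (l + s - k) = k" by auto
    from k have "s + (l + k) = (l + s - k) + 2 * k" by auto
    then have "even (l + s - k) = even (s + (l + k))"
      by (simp only: even_add even_mult_iff even_numeral simp_thms)
    then show "?f (l + s - k) = sg s (?g k)"
      unfolding e sg_sg by (rule sg_cong_parity)
  qed
  finally have "(\<Sum>i\<le>l. ?f i) = - (\<Sum>k<s. sg s (?g k))"
    by (simp add: eq_neg_iff_add_eq_0)
  then have "sg s (\<Sum>i\<le>l. ?f i) = - (\<Sum>k<s. ?g k)"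
    by (simp add: sg_minus sg_sum)
  then show ?thesis
    by (simp only: sg_sum)
qed

section \<open>The total differential of a sequence\<close>

definition graded_seq :: "int \<Rightarrow> int \<Rightarrow> (nat \<Rightarrow> 'a) \<Rightarrow> bool" where
  "graded_seq P Q s \<longleftrightarrow> (\<forall>j. s j \<in> A (P - int j) (Q - int j))"

lemma graded_seq_mem: "graded_seq P Q s \<Longrightarrow> s j \<in> A (P - int j) (Q - int j)"
  by (simp add: graded_seq_def)

definition Dseq :: "int \<Rightarrow> int \<Rightarrow> (nat \<Rightarrow> 'a) \<Rightarrow> nat \<Rightarrow> 'a" where
  "Dseq P Q s l = (\<Sum>i\<le>l. sg i (d i (P - int (l - i)) (Q - int (l - i)) (s (l - i))))"

text \<open>Up to the sign \<open>(-1)^j\<close>, \<open>Dtrunc R P Q s j\<close> is the part of \<open>Dseq P Q s (R + j)\<close> that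
  involves only \<open>s 0, \<dots>, s (R - 1)\<close>.\<close>
definition Dtrunc :: "nat \<Rightarrow> int \<Rightarrow> int \<Rightarrow> (nat \<Rightarrow> 'a) \<Rightarrow> nat \<Rightarrow> 'a" where
  "Dtrunc R P Q s j = (\<Sum>m<R. sg (R - m) (d (R - m + j) (P - int m) (Q - int m) (s m)))"

lemma Dseq_Dtrunc_expand:
  assumes s: "graded_seq P Q s"
  shows "Dseq (P - int R) (Q + 1 - int R) (Dtrunc R P Q s) l
    = - (\<Sum>m<R. \<Sum>k<R - m. sg (l + k) (d (l + (R - m) - k) (P - int m - int k) (Q - int m + 1 - int k)
          (d k (P - int m) (Q - int m) (s m))))"
proof -
  define Y where "Y m i = d i (P - int m - int (l + (R - m) - i)) (Q - int m + 1 - int (l + (R - m) - i))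
      (d (l + (R - m) - i) (P - int m) (Q - int m) (s m))" for m i
  note sm = graded_seq_mem[OF s]
  have "Dseq (P - int R) (Q + 1 - int R) (Dtrunc R P Q s) l
      = (\<Sum>i\<le>l. \<Sum>m<R. sg (R - m) (sg i (Y m i)))"
    unfolding Dseq_def Dtrunc_def
  proof (rule sum.cong[OF refl])
    fix i assume i: "i \<in> {..l}"
    let ?P = "P - int R - int (l - i)" and ?Q = "Q + 1 - int R - int (l - i)"
    let ?g = "\<lambda>m. sg (R - m) (d (R - m + (l - i)) (P - int m) (Q - int m) (s m))"
    have mem: "?g m \<in> A ?P ?Q" if "m \<in> {..<R}" for m
      using that i by (intro A_sg d_mem[OF sm]) (auto simp: of_nat_diff)
    have Y: "Y m i = d i ?P ?Q (d (R - m + (l - i)) (P - int m) (Q - int m) (s m))" if "m < R" for m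
      unfolding Y_def using that i by (simp add: of_nat_diff algebra_simps)
    have "sg i (d i ?P ?Q (sum ?g {..<R})) = (\<Sum>m<R. sg i (d i ?P ?Q (?g m)))"
      by (simp only: d_sum[OF finite_lessThan mem] sg_sum)
    also have "\<dots> = (\<Sum>m<R. sg (R - m) (sg i (Y m i)))"
      by (intro sum.cong refl) (simp add: d_sg d_mem[OF sm] Y sg_sg add.commute)
    finally show "sg i (d i ?P ?Q (sum ?g {..<R})) = (\<Sum>m<R. sg (R - m) (sg i (Y m i)))" .
  qed
  also have "\<dots> = (\<Sum>m<R. \<Sum>i\<le>l. sg (R - m) (sg i (Y m i)))"
    by (rule sum.swap)
  also have "\<dots> = (\<Sum>m<R. - (\<Sum>k<R - m. sg (l + k) (d (l + (R - m) - k) (P - int m - int k)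
      (Q - int m + 1 - int k) (d k (P - int m) (Q - int m) (s m)))))"
    unfolding Y_def by (intro sum.cong refl) (rule d_d_sum_prefix[OF sm])
  finally show ?thesis
    by (simp only: sum_negf)
qed

lemma Dseq_Dtrunc:
  assumes s: "graded_seq P Q s" and cyc: "\<And>t. t < R \<Longrightarrow> Dseq P Q s t = 0"
    and P': "P' = P - int R" and Q': "Q' = Q + 1 - int R"
  shows "Dseq P' Q' (Dtrunc R P Q s) l = 0"
proof -
  define T where "T m k = sg (l + k) (d (l + (R - m) - k) (P - int m - int k) (Q - int m + 1 - int k)
      (d k (P - int m) (Q - int m) (s m)))" for m k
  note sm = graded_seq_mem[OF s]
  have "Dseq P' Q' (Dtrunc R P Q s) l = - (\<Sum>m<R. \<Sum>k<R - m. T m k)"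
    unfolding P' Q' T_def by (rule Dseq_Dtrunc_expand[OF s])
  also have "\<dots> = - (\<Sum>t<R. \<Sum>k\<le>t. T (t - k) k)"
    by (simp only: sum_triangle_swap)
  also have "\<dots> = 0"
  proof -
    have "(\<Sum>k\<le>t. T (t - k) k) = sg l (d (l + R - t) (P - int t) (Q + 1 - int t) (Dseq P Q s t))"
      if t: "t < R" for t
    proof -
      let ?g = "\<lambda>k. sg k (d k (P - int (t - k)) (Q - int (t - k)) (s (t - k)))"
      have mem: "?g k \<in> A (P - int t) (Q + 1 - int t)" if "k \<in> {..t}" for k
        using that by (intro A_sg d_mem[OF sm]) (auto simp: of_nat_diff)
      have "sg l (d (l + R - t) (P - int t) (Q + 1 - int t) (sum ?g {..t}))
          = (\<Sum>k\<le>t. sg l (d (l + R - t) (P - int t) (Q + 1 - int t) (?g k)))"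
        by (simp only: d_sum[OF finite_atMost mem] sg_sum)
      also have "\<dots> = (\<Sum>k\<le>t. T (t - k) k)"
      proof (intro sum.cong refl)
        fix k assume k: "k \<in> {..t}"
        have dk: "d k (P - int (t - k)) (Q - int (t - k)) (s (t - k)) \<in> A (P - int t) (Q + 1 - int t)"
          using k by (intro d_mem[OF sm]) (auto simp: of_nat_diff)
        have e: "l + (R - (t - k)) - k = l + R - t" "P - int (t - k) - int k = P - int t"
          "Q - int (t - k) + 1 - int k = Q + 1 - int t"
          using k t by (auto simp: of_nat_diff)
        show "sg l (d (l + R - t) (P - int t) (Q + 1 - int t) (?g k)) = T (t - k) k"
          unfolding T_def e d_sg[OF dk] sg_sg ..
      qed
      finally show ?thesis
        unfolding Dseq_def by (rule sym)
    qed
    then show ?thesis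
      using cyc by simp
  qed
  finally show ?thesis .
qed

lemma graded_seq_zero: "graded_seq P Q (\<lambda>_. 0)"
  by (simp add: graded_seq_def)

lemma graded_seq_add: "graded_seq P Q s \<Longrightarrow> graded_seq P Q t \<Longrightarrow> graded_seq P Q (\<lambda>j. s j + t j)"
  by (simp add: graded_seq_def A_add)

lemma graded_seq_diff: "graded_seq P Q s \<Longrightarrow> graded_seq P Q t \<Longrightarrow> graded_seq P Q (\<lambda>j. s j - t j)"
  by (simp add: graded_seq_def A_diff)

lemma graded_seq_update:
  "graded_seq P Q s \<Longrightarrow> x \<in> A (P - int k) (Q - int k) \<Longrightarrow> graded_seq P Q (s(k := x))"
  by (simp add: graded_seq_def)

lemma graded_seq_shift: "graded_seq (P - 1) (Q - 1) c \<Longrightarrow> graded_seq P Q (shift_seq c)"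
  unfolding graded_seq_def shift_seq_def
proof (intro allI)
  fix j assume c: "\<forall>j. c j \<in> A (P - 1 - int j) (Q - 1 - int j)"
  show "(if j = 0 then 0 else c (j - 1)) \<in> A (P - int j) (Q - int j)"
  proof (cases "j = 0")
    case False
    then have "P - 1 - int (j - 1) = P - int j" "Q - 1 - int (j - 1) = Q - int j"
      by (simp_all add: of_nat_diff)
    then show ?thesis using c False by metis
  qed simp
qed

lemma graded_seq_d: "x \<in> A P (Q - 1) \<Longrightarrow> graded_seq P Q (\<lambda>j. d j P (Q - 1) x)"
  by (auto simp: graded_seq_def intro: d_mem)

lemma Dseq_cong: "(\<And>j. j \<le> l \<Longrightarrow> s j = s' j) \<Longrightarrow> Dseq P Q s l = Dseq P Q s' l"
  unfolding Dseq_def by (intro sum.cong) auto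

lemma Dseq_zero: "Dseq P Q (\<lambda>_. 0) l = 0"
  by (simp add: Dseq_def)

lemma Dseq_add:
  assumes "graded_seq P Q s" and "graded_seq P Q t"
  shows "Dseq P Q (\<lambda>j. s j + t j) l = Dseq P Q s l + Dseq P Q t l"
  unfolding Dseq_def sum.distrib[symmetric]
  by (intro sum.cong refl)
     (simp only: d_add[OF graded_seq_mem[OF assms(1)] graded_seq_mem[OF assms(2)]] sg_add)

lemma Dseq_diff:
  assumes "graded_seq P Q s" and "graded_seq P Q t"
  shows "Dseq P Q (\<lambda>j. s j - t j) l = Dseq P Q s l - Dseq P Q t l"
  unfolding Dseq_def sum_subtractf[symmetric]
  by (intro sum.cong refl)
     (simp only: d_diff[OF graded_seq_mem[OF assms(1)] graded_seq_mem[OF assms(2)]] sg_diff)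

lemma Dseq_mem:
  assumes "graded_seq P Q s" and "P' = P - int l" and "Q' = Q + 1 - int l"
  shows "Dseq P Q s l \<in> A P' Q'"
  unfolding Dseq_def using assms
  by (intro A_sum A_sg d_mem[OF graded_seq_mem[OF assms(1)]]) (auto simp: of_nat_diff)

lemma Dseq_shift_0: "Dseq P Q (shift_seq c) 0 = 0"
  by (simp add: Dseq_def shift_seq_def)

lemma Dseq_shift_Suc: "Dseq P Q (shift_seq c) (Suc l) = Dseq (P - 1) (Q - 1) c l"
proof -
  have "Dseq P Q (shift_seq c) (Suc l)
     = (\<Sum>i\<le>l. sg i (d i (P - int (Suc l - i)) (Q - int (Suc l - i)) (shift_seq c (Suc l - i))))"
    by (simp add: Dseq_def shift_seq_def)
  also have "\<dots> = Dseq (P - 1) (Q - 1) c l"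
    unfolding Dseq_def shift_seq_def
    by (intro sum.cong refl) (auto simp: of_nat_diff Suc_diff_le algebra_simps)
  finally show ?thesis .
qed

lemma Dseq_d: "x \<in> A P (Q - 1) \<Longrightarrow> Dseq P Q (\<lambda>j. d j P (Q - 1) x) l = 0"
  using d_d_sum[of x P "Q - 1" l] by (simp add: Dseq_def)

lemma Dseq_eq_Dtrunc: "Dseq P Q s R = d 0 (P - int R) (Q - int R) (s R) + Dtrunc R P Q s 0"
proof -
  have "Dseq P Q s R = (\<Sum>m<Suc R. sg (R - m) (d (R - m) (P - int m) (Q - int m) (s m)))"
    unfolding Dseq_def lessThan_Suc_atMost
    by (rule sum.reindex_bij_witness[where i="\<lambda>m. R - m" and j="\<lambda>i. R - i"]) auto
  then show ?thesis
    by (simp add: Dtrunc_def add.commute)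
qed

lemma Dtrunc_cong: "(\<And>m. m < R \<Longrightarrow> s m = s' m) \<Longrightarrow> Dtrunc R P Q s j = Dtrunc R P Q s' j"
  unfolding Dtrunc_def by (intro sum.cong) auto

lemma Dtrunc_update [simp]: "Dtrunc R P Q (s(R := x)) j = Dtrunc R P Q s j"
  by (rule Dtrunc_cong) simp

lemma Dtrunc_add:
  assumes "graded_seq P Q s" and "graded_seq P Q t"
  shows "Dtrunc R P Q (\<lambda>m. s m + t m) j = Dtrunc R P Q s j + Dtrunc R P Q t j"
  unfolding Dtrunc_def sum.distrib[symmetric]
  by (intro sum.cong refl)
     (simp only: d_add[OF graded_seq_mem[OF assms(1)] graded_seq_mem[OF assms(2)]] sg_add)

lemma Dtrunc_diff:
  assumes "graded_seq P Q s" and "graded_seq P Q t"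
  shows "Dtrunc R P Q (\<lambda>m. s m - t m) j = Dtrunc R P Q s j - Dtrunc R P Q t j"
  unfolding Dtrunc_def sum_subtractf[symmetric]
  by (intro sum.cong refl)
     (simp only: d_diff[OF graded_seq_mem[OF assms(1)] graded_seq_mem[OF assms(2)]] sg_diff)

lemma Dtrunc_shift: "Dtrunc (Suc R) P Q (shift_seq c) j = Dtrunc R (P - 1) (Q - 1) c j"
  unfolding Dtrunc_def sum.lessThan_Suc_shift by (simp add: shift_seq_def algebra_simps)

lemma Dtrunc_graded:
  assumes "graded_seq P Q s" and "P' = P - int R" and "Q' = Q + 1 - int R"
  shows "graded_seq P' Q' (Dtrunc R P Q s)"
  unfolding graded_seq_def Dtrunc_def using assms
  by (intro allI A_sum A_sg d_mem[OF graded_seq_mem[OF assms(1)]]) (auto simp: of_nat_diff)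

section \<open>Witness cycles and witness boundaries\<close>

lemma ZW_iff:
  "a \<in> ZW A d r p q \<longleftrightarrow>
     graded_seq p q a \<and> (\<forall>i. max r 1 \<le> i \<longrightarrow> a i = 0) \<and> (\<forall>l<r. Dseq p q a l = 0)"
proof -
  have "graded_seq p q a"
    if "\<forall>i<max r 1. a i \<in> A (p - int i) (q - int i)" and "\<forall>i. max r 1 \<le> i \<longrightarrow> a i = 0"
    unfolding graded_seq_def
  proof
    fix i show "a i \<in> A (p - int i) (q - int i)"
    proof (cases "i < max r 1")
      case False
      then have "a i = 0" using that(2) not_less by blast
      then show ?thesis by simp
    qed (use that(1) in blast)
  qed
  then show ?thesis
    unfolding ZW_def Dseq_def[symmetric] by (auto simp: graded_seq_def)
qed

lemma ZW_graded: "a \<in> ZW A d r p q \<Longrightarrow> graded_seq p q a"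
  by (simp add: ZW_iff)

lemma ZW_zero: "(\<lambda>_. 0) \<in> ZW A d r p q"
  by (simp add: ZW_iff graded_seq_zero Dseq_zero)

lemma ZW_diff: "a \<in> ZW A d r p q \<Longrightarrow> a' \<in> ZW A d r p q \<Longrightarrow> (\<lambda>k. a k - a' k) \<in> ZW A d r p q"
  by (simp add: ZW_iff graded_seq_diff Dseq_diff)

lemma Zr_eq_image_ZW: "Zr A d r p q = (\<lambda>a. a 0) ` ZW A d r p q"
proof (intro set_eqI iffI)
  fix z assume z: "z \<in> Zr A d r p q"
  show "z \<in> (\<lambda>a. a 0) ` ZW A d r p q"
  proof (cases "r = 0")
    case True
    then have "(\<lambda>k. if k = 0 then z else 0) \<in> ZW A d r p q"
      using z by (auto simp: Zr_def ZW_def)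
    then show ?thesis by (rule rev_image_eqI) simp
  next
    case False
    from z False obtain a where zA: "z \<in> A p q" and a0: "a 0 = z"
      and am: "\<forall>j\<in>{1..r-1}. a j \<in> A (p - int j) (q - int j)"
      and ac: "\<forall>l<r. Dseq p q a l = 0"
      unfolding Zr_def Dseq_def by auto
    define a' where "a' k = (if k < r then a k else 0)" for k
    have "a' k \<in> A (p - int k) (q - int k)" for k
      using zA a0 am by (cases "k = 0") (auto simp: a'_def)
    then have "graded_seq p q a'"
      by (simp add: graded_seq_def)
    moreover have "Dseq p q a' l = 0" if "l < r" for l
      using that ac Dseq_cong[of l a' a] by (simp add: a'_def)
    ultimately have "a' \<in> ZW A d r p q"
      using False by (simp add: ZW_iff a'_def)
    moreover have "a' 0 = z" using False a0 by (simp add: a'_def)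
    ultimately show ?thesis by (metis rev_image_eqI)
  qed
next
  fix z assume "z \<in> (\<lambda>a. a 0) ` ZW A d r p q"
  then obtain a where a: "a \<in> ZW A d r p q" and z: "z = a 0" by auto
  have "a 0 \<in> A p q"
    using graded_seq_mem[OF ZW_graded[OF a], of 0] by simp
  then show "z \<in> Zr A d r p q"
    using graded_seq_mem[OF ZW_graded[OF a]] a z by (auto simp: Zr_def ZW_iff Dseq_def)
qed

lemma Br_eq:
  assumes r: "1 \<le> r"
  shows "Br A d r p q = {x \<in> A p q. \<exists>b. (\<forall>i<r. b i \<in> A (p + int r - 1 - int i) (q + int r - 2 - int i)) \<and>
      x = Dseq (p + int r - 1) (q + int r - 2) b (r - 1) \<and>
      (\<forall>l. l + 2 \<le> r \<longrightarrow> Dseq (p + int r - 1) (q + int r - 2) b l = 0)}"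
proof -
  have low: "Dseq (p + int r - 1) (q + int r - 2) b l
      = (\<Sum>i\<le>l. sg i (d i (p + int r - 1 - int l + int i) (q + int r - 2 - int l + int i) (b (l - i))))"
    for b l
    unfolding Dseq_def by (intro sum.cong refl) (simp add: of_nat_diff algebra_simps)
  have "{..r - 1} = {..<r}" using r by auto
  moreover have "p + int r - 1 - int (r - 1 - i) = p + int i"
    "q + int r - 2 - int (r - 1 - i) = q + int i - 1" if "i \<in> {..<r}" for i
    using that by (simp_all add: of_nat_diff)
  ultimately have top: "Dseq (p + int r - 1) (q + int r - 2) b (r - 1)
      = (\<Sum>i<r. sg i (d i (p + int i) (q + int i - 1) (b (r - 1 - i))))" for b
    unfolding Dseq_def by (intro sum.cong) (simp_all only:)
  have "r \<noteq> 0" using r by simp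
  then show ?thesis
    unfolding Br_def low[symmetric] top[symmetric] by (simp only: if_False)
qed

lemma Br_iff:
  assumes r: "1 \<le> r" and P: "P = p + int r - 1" and Q: "Q = q + int r - 2"
  shows "x \<in> Br A d r p q \<longleftrightarrow>
    (\<exists>b. graded_seq P Q b \<and> (\<forall>l<r - 1. Dseq P Q b l = 0) \<and> x = Dseq P Q b (r - 1))"
proof
  assume "x \<in> Br A d r p q"
  then obtain b where b: "\<forall>i<r. b i \<in> A (P - int i) (Q - int i)"
    and x: "x = Dseq P Q b (r - 1)" and cyc: "\<forall>l. l + 2 \<le> r \<longrightarrow> Dseq P Q b l = 0"
    unfolding Br_eq[OF r] P Q by blast
  define b' where "b' i = (if i < r then b i else 0)" for i
  have "graded_seq P Q b'"
    using b by (simp add: graded_seq_def b'_def)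
  moreover have "Dseq P Q b' l = 0" if "l < r - 1" for l
  proof -
    have "Dseq P Q b' l = Dseq P Q b l"
      using that by (intro Dseq_cong) (auto simp: b'_def)
    then show ?thesis using that cyc by simp
  qed
  moreover have "x = Dseq P Q b' (r - 1)"
    unfolding x using r by (intro Dseq_cong) (auto simp: b'_def)
  ultimately show "\<exists>b. graded_seq P Q b \<and> (\<forall>l<r - 1. Dseq P Q b l = 0) \<and> x = Dseq P Q b (r - 1)"
    by blast
next
  assume "\<exists>b. graded_seq P Q b \<and> (\<forall>l<r - 1. Dseq P Q b l = 0) \<and> x = Dseq P Q b (r - 1)"
  then obtain b where b: "graded_seq P Q b" and cyc: "\<forall>l<r - 1. Dseq P Q b l = 0"
    and x: "x = Dseq P Q b (r - 1)" by blast
  have "x \<in> A p q"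
    unfolding x using r by (intro Dseq_mem[OF b]) (simp_all add: P Q of_nat_diff)
  moreover have "\<forall>i<r. b i \<in> A (P - int i) (Q - int i)"
    using b by (simp add: graded_seq_mem)
  moreover have "\<forall>l. l + 2 \<le> r \<longrightarrow> Dseq P Q b l = 0"
    using cyc by simp
  ultimately show "x \<in> Br A d r p q"
    unfolding Br_eq[OF r] P Q x by blast
qed

lemma Br_zero: "0 \<in> Br A d r p q"
  unfolding Br_def by (auto intro!: exI[of _ "\<lambda>_. 0"])

lemma Br_mem: "x \<in> Br A d r p q \<Longrightarrow> x \<in> A p q"
  unfolding Br_def by (auto split: if_splits)

lemma Br_diff:
  assumes x: "x \<in> Br A d r p q" and y: "y \<in> Br A d r p q"
  shows "x - y \<in> Br A d r p q"
proof (cases "r = 0")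
  case True
  then show ?thesis using x y by (simp add: Br_def)
next
  case False
  let ?P = "p + int r - 1" and ?Q = "q + int r - 2"
  have Br: "z \<in> Br A d r p q \<longleftrightarrow>
      (\<exists>b. graded_seq ?P ?Q b \<and> (\<forall>l<r - 1. Dseq ?P ?Q b l = 0) \<and> z = Dseq ?P ?Q b (r - 1))" for z
    by (rule Br_iff) (use False in simp_all)
  from x y obtain b b' where
    b: "graded_seq ?P ?Q b" "\<forall>l<r - 1. Dseq ?P ?Q b l = 0" "x = Dseq ?P ?Q b (r - 1)" and
    b': "graded_seq ?P ?Q b'" "\<forall>l<r - 1. Dseq ?P ?Q b' l = 0" "y = Dseq ?P ?Q b' (r - 1)"
    unfolding Br by blast
  show ?thesis
    using b b' unfolding Br
    by (intro exI[of _ "\<lambda>j. b j - b' j"]) (simp add: graded_seq_diff Dseq_diff)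
qed

lemma Br_add: "x \<in> Br A d r p q \<Longrightarrow> y \<in> Br A d r p q \<Longrightarrow> x + y \<in> Br A d r p q"
  using Br_diff[of x r p q "0 - y"] Br_diff[OF Br_zero, of y] by simp

lemma ecl_eq_iff: "ecl A d r p q z = ecl A d r p q z' \<longleftrightarrow> z - z' \<in> Br A d r p q"
proof
  assume e: "ecl A d r p q z = ecl A d r p q z'"
  have "z \<in> ecl A d r p q z"
    unfolding ecl_def using Br_zero by (auto intro!: image_eqI[of _ _ 0])
  then have "z \<in> ecl A d r p q z'"
    by (simp only: e)
  then obtain b where "b \<in> Br A d r p q" "z = z' + b"
    unfolding ecl_def by auto
  then show "z - z' \<in> Br A d r p q" by simp
next
  assume m: "z - z' \<in> Br A d r p q"
  show "ecl A d r p q z = ecl A d r p q z'"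
    unfolding ecl_def
  proof (intro set_eqI iffI)
    fix y assume "y \<in> (+) z ` Br A d r p q"
    then obtain b where b: "b \<in> Br A d r p q" "y = z + b" by auto
    then have "y = z' + ((z - z') + b)" by (simp add: algebra_simps)
    then show "y \<in> (+) z' ` Br A d r p q" using Br_add[OF m b(1)] by blast
  next
    fix y assume "y \<in> (+) z' ` Br A d r p q"
    then obtain b where b: "b \<in> Br A d r p q" "y = z' + b" by auto
    then have "y = z + (b - (z - z'))" by (simp add: algebra_simps)
    then show "y \<in> (+) z ` Br A d r p q" using Br_diff[OF b(1) m] by blast
  qed
qed

definition w_core :: "nat \<Rightarrow> int \<Rightarrow> int \<Rightarrow> (nat \<Rightarrow> 'a) \<Rightarrow> 'a \<Rightarrow> nat \<Rightarrow> 'a" where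
  "w_core r p q b a = (\<lambda>j. d j p (q - 1) a + Dtrunc (r - 1) (p + int r - 1) (q + int r - 2) b j)"

lemma w_sum_eq_Dtrunc:
  assumes r: "2 \<le> r" and j: "j < r"
  shows "sg j (\<Sum>i\<in>{j+1..r+j-1}. sg i (d i (p - int j + int i) (q - 1 - int j + int i) (b (r + j - 1 - i))))
    = Dtrunc (r - 1) (p + int r - 1) (q + int r - 2) b j"
  unfolding sg_sum Dtrunc_def
proof (rule sum.reindex_bij_witness[where i="\<lambda>m. r - 1 - m + j" and j="\<lambda>i. r + j - 1 - i"])
  fix i assume i: "i \<in> {j+1..r+j-1}"
  have e1: "r - 1 - (r + j - 1 - i) + j = i" using i r by auto
  have e2: "p + int r - 1 - int (r + j - 1 - i) = p - int j + int i"
    "q + int r - 2 - int (r + j - 1 - i) = q - 1 - int j + int i"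
    using i r by (auto simp: of_nat_diff)
  have "j + i = (r - 1 - (r + j - 1 - i)) + 2 * j" using i r by auto
  then have "even (r - 1 - (r + j - 1 - i)) = even (j + i)"
    by (simp only: even_add even_mult_iff even_numeral simp_thms)
  then show "sg (r - 1 - (r + j - 1 - i)) (d (r - 1 - (r + j - 1 - i) + j) (p + int r - 1 - int (r + j - 1 - i))
         (q + int r - 2 - int (r + j - 1 - i)) (b (r + j - 1 - i))) =
       sg j (sg i (d i (p - int j + int i) (q - 1 - int j + int i) (b (r + j - 1 - i))))"
    unfolding e1 e2 sg_sg by (rule sg_cong_parity)
qed (use r j in auto)

lemma w_eq:
  assumes r: "1 \<le> r"
  shows "w A d r p q (b, a, c) = (\<lambda>j. if j < r then w_core r p q b a j + shift_seq c j else 0)"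
proof
  fix j
  show "w A d r p q (b, a, c) j = (if j < r then w_core r p q b a j + shift_seq c j else 0)"
  proof (cases "r = 1")
    case True
    then show ?thesis by (simp add: w_def w_core_def Dtrunc_def shift_seq_def)
  next
    case False
    then have r2: "2 \<le> r" using r by simp
    show ?thesis
    proof (cases "j < r")
      case True
      have "w A d r p q (b, a, c) j = d j p (q - 1) a
          + sg j (\<Sum>i\<in>{j+1..r+j-1}. sg i (d i (p - int j + int i) (q - 1 - int j + int i) (b (r + j - 1 - i))))
          + shift_seq c j"
        using r2 True by (simp add: w_def shift_seq_def)
      then show ?thesis
        unfolding w_sum_eq_Dtrunc[OF r2 True] w_core_def using True by simp
    qed (simp add: w_def)
  qed
qed

lemma w_page_0: "w A d 0 p q x = (\<lambda>_. 0)"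
  by (rule ext) (simp add: w_def split: prod.splits)

lemma w_0_eq_beta: "w A d r p q x 0 = beta d r p q x"
  by (cases x) (simp add: w_def beta_def)

lemma BW_page_0: "BW A d 0 p q = {((\<lambda>_. 0), 0, (\<lambda>_. 0))}"
  unfolding BW_def by auto

lemma BW_iff:
  assumes "1 \<le> r"
  shows "(b, a, c) \<in> BW A d r p (q - 1) \<longleftrightarrow> a \<in> A p (q - 1) \<and>
    (if r = 1 then b = (\<lambda>_. 0) \<and> c = (\<lambda>_. 0)
     else b \<in> ZW A d (r - 1) (p + int r - 1) (q + int r - 2) \<and> c \<in> ZW A d (r - 1) (p - 1) (q - 1))"
proof -
  have e: "q - 1 + int r - 1 = q + int r - 2" by simp
  show ?thesis
    unfolding BW_def e using assms by auto
qed

lemma BW_facts: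
  assumes "1 \<le> r" and "(b, a, c) \<in> BW A d r p (q - 1)"
  shows "a \<in> A p (q - 1)" and "b \<in> ZW A d (r - 1) (p + int r - 1) (q + int r - 2)"
    and "c \<in> ZW A d (r - 1) (p - 1) (q - 1)"
  using assms by (auto simp: BW_iff ZW_zero split: if_splits)

lemma BW_intro:
  assumes "1 \<le> r" and "a \<in> A p (q - 1)" and "b \<in> ZW A d (r - 1) (p + int r - 1) (q + int r - 2)"
    and "c \<in> ZW A d (r - 1) (p - 1) (q - 1)" and "r = 1 \<Longrightarrow> b = (\<lambda>_. 0) \<and> c = (\<lambda>_. 0)"
  shows "(b, a, c) \<in> BW A d r p (q - 1)"
  using assms by (cases "r = 1") (simp_all add: BW_iff)

lemma w_core_graded:
  assumes r: "1 \<le> r" and a: "a \<in> A p (q - 1)" and b: "graded_seq (p + int r - 1) (q + int r - 2) b"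
  shows "graded_seq p q (w_core r p q b a)"
proof -
  have "graded_seq p q (Dtrunc (r - 1) (p + int r - 1) (q + int r - 2) b)"
    using r by (intro Dtrunc_graded[OF b]) (simp_all add: of_nat_diff)
  then show ?thesis
    unfolding w_core_def by (rule graded_seq_add[OF graded_seq_d[OF a]])
qed

lemma w_core_cycle:
  assumes r: "1 \<le> r" and a: "a \<in> A p (q - 1)" and b: "b \<in> ZW A d (r - 1) (p + int r - 1) (q + int r - 2)"
  shows "Dseq p q (w_core r p q b a) l = 0"
proof -
  let ?D = "Dtrunc (r - 1) (p + int r - 1) (q + int r - 2) b"
  have g: "graded_seq p q ?D"
    using r by (intro Dtrunc_graded[OF ZW_graded[OF b]]) (simp_all add: of_nat_diff)
  have "Dseq p q ?D l = 0"
    using r b by (intro Dseq_Dtrunc[OF ZW_graded[OF b]]) (simp_all add: ZW_iff of_nat_diff)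
  moreover have "Dseq p q (w_core r p q b a) l = Dseq p q (\<lambda>j. d j p (q - 1) a) l + Dseq p q ?D l"
    unfolding w_core_def by (rule Dseq_add[OF graded_seq_d[OF a] g])
  ultimately show ?thesis
    by (simp add: Dseq_d[OF a])
qed

lemma w_core_0:
  assumes "1 \<le> r"
  shows "w_core r p q b a 0 = Dseq (p + int r - 1) (q + int r - 2) (b(r - 1 := a)) (r - 1)"
  using assms by (simp add: w_core_def Dseq_eq_Dtrunc of_nat_diff)

lemma ZW_core_shift:
  assumes r: "1 \<le> r" and U: "graded_seq p q U" "\<And>l. Dseq p q U l = 0"
    and c: "c \<in> ZW A d (r - 1) (p - 1) (q - 1)"
  shows "(\<lambda>j. if j < r then U j + shift_seq c j else 0) \<in> ZW A d r p q"
proof -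
  have sc: "graded_seq p q (shift_seq c)"
    by (rule graded_seq_shift[OF ZW_graded[OF c]])
  have cyc: "Dseq p q (shift_seq c) l = 0" if "l < r" for l
  proof (cases l)
    case (Suc t)
    then show ?thesis using c that by (simp add: Dseq_shift_Suc ZW_iff)
  qed (simp add: Dseq_shift_0)
  have "graded_seq p q (\<lambda>j. if j < r then U j + shift_seq c j else 0)"
    using graded_seq_mem[OF graded_seq_add[OF U(1) sc]] by (simp add: graded_seq_def)
  moreover have "Dseq p q (\<lambda>j. if j < r then U j + shift_seq c j else 0) l = 0" if "l < r" for l
  proof -
    have "Dseq p q (\<lambda>j. if j < r then U j + shift_seq c j else 0) l = Dseq p q (\<lambda>j. U j + shift_seq c j) l"
      using that by (intro Dseq_cong) simp
    then show ?thesis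
      using that by (simp add: Dseq_add[OF U(1) sc] U(2) cyc)
  qed
  ultimately show ?thesis
    using r by (simp add: ZW_iff)
qed

lemma w_mem_ZW:
  assumes x: "x \<in> BW A d r p (q - 1)"
  shows "w A d r p q x \<in> ZW A d r p q"
proof (cases "r = 0")
  case True
  then show ?thesis by (simp add: w_page_0 ZW_zero)
next
  case False
  then have r: "1 \<le> r" by simp
  obtain b a c where xe: "x = (b, a, c)" by (cases x)
  note F = BW_facts[OF r x[unfolded xe]]
  show ?thesis
    unfolding xe w_eq[OF r]
    by (rule ZW_core_shift[OF r w_core_graded[OF r F(1) ZW_graded[OF F(2)]] w_core_cycle[OF r F(1) F(2)] F(3)])
qed

lemma beta_mem_Br:
  assumes x: "x \<in> BW A d r p (q - 1)"
  shows "beta d r p q x \<in> Br A d r p q"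
proof (cases "r = 0")
  case True
  then show ?thesis by (simp add: beta_def Br_zero split: prod.splits)
next
  case False
  then have r: "1 \<le> r" by simp
  obtain b a c where xe: "x = (b, a, c)" by (cases x)
  note F = BW_facts[OF r x[unfolded xe]]
  let ?P = "p + int r - 1" and ?Q = "q + int r - 2"
  have "graded_seq ?P ?Q (b(r - 1 := a))"
    using r F(1) by (intro graded_seq_update[OF ZW_graded[OF F(2)]]) (simp add: of_nat_diff)
  moreover have "Dseq ?P ?Q (b(r - 1 := a)) l = 0" if "l < r - 1" for l
  proof -
    have "Dseq ?P ?Q (b(r - 1 := a)) l = Dseq ?P ?Q b l"
      using that by (intro Dseq_cong) simp
    then show ?thesis using that F(2) by (simp add: ZW_iff)
  qed
  moreover have "beta d r p q x = Dseq ?P ?Q (b(r - 1 := a)) (r - 1)"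
    using r by (simp add: xe w_0_eq_beta[symmetric] w_eq[OF r] shift_seq_def w_core_0[OF r])
  ultimately show ?thesis
    using Br_iff[OF r refl refl] by blast
qed

lemma ZW_unshift:
  assumes r: "1 \<le> r" and a: "a \<in> ZW A d r p q"
    and U: "graded_seq p q U" "\<And>l. Dseq p q U l = 0" and U0: "U 0 = a 0"
  shows "(\<lambda>k. if k < r - 1 then a (Suc k) - U (Suc k) else 0) \<in> ZW A d (r - 1) (p - 1) (q - 1)"
proof -
  let ?c = "\<lambda>k. if k < r - 1 then a (Suc k) - U (Suc k) else 0"
  have ga: "graded_seq p q a" by (rule ZW_graded[OF a])
  have "?c k \<in> A (p - 1 - int k) (q - 1 - int k)" for k
    using graded_seq_mem[OF graded_seq_diff[OF ga U(1)], of "Suc k"] by (simp add: algebra_simps)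
  moreover have "Dseq (p - 1) (q - 1) ?c t = 0" if t: "t < r - 1" for t
  proof -
    have "Dseq (p - 1) (q - 1) ?c t = Dseq p q (shift_seq ?c) (Suc t)"
      by (rule Dseq_shift_Suc[symmetric])
    also have "\<dots> = Dseq p q (\<lambda>j. a j - U j) (Suc t)"
      using t U0 by (intro Dseq_cong) (auto simp: shift_seq_def)
    also have "\<dots> = 0"
      using t a U(2) by (simp add: Dseq_diff[OF ga U(1)] ZW_iff)
    finally show ?thesis .
  qed
  ultimately show ?thesis
    by (simp add: ZW_iff graded_seq_def)
qed

lemma w_unshift:
  assumes r: "1 \<le> r" and a: "a \<in> ZW A d r p q" and U0: "w_core r p q b a' 0 = a 0"
  shows "w A d r p q (b, a', \<lambda>k. if k < r - 1 then a (Suc k) - w_core r p q b a' (Suc k) else 0) = a"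
proof
  fix j
  show "w A d r p q (b, a', \<lambda>k. if k < r - 1 then a (Suc k) - w_core r p q b a' (Suc k) else 0) j = a j"
  proof (cases "j < r")
    case True
    then show ?thesis
      unfolding w_eq[OF r] using U0 by (cases j) (auto simp: shift_seq_def)
  next
    case False
    then show ?thesis
      unfolding w_eq[OF r] using a r by (auto simp: ZW_iff)
  qed
qed

lemma ZW_Br_imp_mem_image_w:
  assumes a: "a \<in> ZW A d r p q" and a0: "a 0 \<in> Br A d r p q"
  shows "a \<in> w A d r p q ` BW A d r p (q - 1)"
proof (cases "r = 0")
  case True
  have "a k = 0" for k
    using a a0 True by (cases k) (auto simp: ZW_iff Br_def)
  then show ?thesis
    using True by (simp add: BW_page_0 w_page_0 fun_eq_iff)
next
  case False
  then have r: "1 \<le> r" by simp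
  let ?P = "p + int r - 1" and ?Q = "q + int r - 2"
  from a0 obtain bb where bb: "graded_seq ?P ?Q bb" "\<forall>l<r - 1. Dseq ?P ?Q bb l = 0"
    and a0_eq: "a 0 = Dseq ?P ?Q bb (r - 1)"
    using Br_iff[OF r refl refl] by blast
  define b where "b = (\<lambda>m. if m < r - 1 then bb m else 0)"
  define U where "U = w_core r p q b (bb (r - 1))"
  define c where "c = (\<lambda>k. if k < r - 1 then a (Suc k) - U (Suc k) else 0)"
  have a': "bb (r - 1) \<in> A p (q - 1)"
    using graded_seq_mem[OF bb(1), of "r - 1"] r by (simp add: of_nat_diff)
  have b_ZW: "b \<in> ZW A d (r - 1) ?P ?Q"
  proof -
    have "Dseq ?P ?Q b l = Dseq ?P ?Q bb l" if "l < r - 1" for l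
      using that by (intro Dseq_cong) (simp add: b_def)
    then show ?thesis
      using bb by (auto simp: ZW_iff graded_seq_def b_def)
  qed
  have U0: "U 0 = a 0"
  proof -
    have "U 0 = Dseq ?P ?Q (b(r - 1 := bb (r - 1))) (r - 1)"
      unfolding U_def by (rule w_core_0[OF r])
    also have "\<dots> = Dseq ?P ?Q bb (r - 1)"
      by (intro Dseq_cong) (auto simp: b_def)
    finally show ?thesis using a0_eq by simp
  qed
  have U: "graded_seq p q U" "\<And>l. Dseq p q U l = 0"
    unfolding U_def using w_core_graded[OF r a' ZW_graded[OF b_ZW]] w_core_cycle[OF r a' b_ZW] by auto
  have c_ZW: "c \<in> ZW A d (r - 1) (p - 1) (q - 1)"
    unfolding c_def by (rule ZW_unshift[OF r a U U0])
  have "(b, bb (r - 1), c) \<in> BW A d r p (q - 1)"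
    by (rule BW_intro[OF r a' b_ZW c_ZW]) (simp add: b_def c_def)
  moreover have "w A d r p q (b, bb (r - 1), c) = a"
    unfolding c_def U_def by (rule w_unshift[OF r a U0[unfolded U_def]])
  ultimately show ?thesis by (metis rev_image_eqI)
qed

section \<open>The differential\<close>

lemma delta_eq_Dtrunc: "delta d r p q a = (\<lambda>k. if k < r then Dtrunc r p q a k else 0)"
proof
  fix k
  show "delta d r p q a k = (if k < r then Dtrunc r p q a k else 0)"
  proof (cases "k < r")
    case True
    have "delta d r p q a k = (\<Sum>i\<in>{1..r}. sg i (d (i + k) (p - int r + int i) (q - int r + int i) (a (r - i))))"
      using True by (simp add: delta_def)
    also have "\<dots> = Dtrunc r p q a k"
      unfolding Dtrunc_def
      by (rule sum.reindex_bij_witness[where i="\<lambda>m. r - m" and j="\<lambda>i. r - i"])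
         (auto simp: of_nat_diff algebra_simps)
    finally show ?thesis using True by simp
  qed (simp add: delta_def)
qed

lemma delta_0_eq_sum:
  "delta d r p q a 0 = (\<Sum>i\<in>{1..r}. sg i (d i (p - int (r - i)) (q - int (r - i)) (a (r - i))))"
  unfolding delta_def by (auto intro!: sum.cong simp: of_nat_diff algebra_simps)

lemma delta_ZW:
  assumes a: "a \<in> ZW A d r p q"
  shows "delta d r p q a \<in> ZW A d r (p - int r) (q + 1 - int r)"
proof -
  let ?P = "p - int r" and ?Q = "q + 1 - int r"
  have g: "graded_seq ?P ?Q (Dtrunc r p q a)"
    by (rule Dtrunc_graded[OF ZW_graded[OF a] refl refl])
  have "Dseq ?P ?Q (Dtrunc r p q a) l = 0" for l
    using a by (intro Dseq_Dtrunc[OF ZW_graded[OF a] _ refl refl]) (simp add: ZW_iff)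
  moreover have "Dseq ?P ?Q (delta d r p q a) l = Dseq ?P ?Q (Dtrunc r p q a) l" if "l < r" for l
    using that unfolding delta_eq_Dtrunc by (intro Dseq_cong) simp
  moreover have "graded_seq ?P ?Q (delta d r p q a)"
    using graded_seq_mem[OF g] by (simp add: graded_seq_def delta_eq_Dtrunc)
  ultimately show ?thesis
    by (simp add: ZW_iff delta_eq_Dtrunc)
qed

lemma delta_0_diff:
  assumes "a \<in> ZW A d r p q" and "a' \<in> ZW A d r p q"
  shows "delta d r p q (\<lambda>k. a k - a' k) 0 = delta d r p q a 0 - delta d r p q a' 0"
  using Dtrunc_diff[OF ZW_graded[OF assms(1)] ZW_graded[OF assms(2)]] by (simp add: delta_eq_Dtrunc)

text \<open>The \<open>0\<close>-th component of \<open>delta\<close> is read off the cycle equation \<open>Dseq p q U r = 0\<close>.\<close>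
lemma delta_core_shift_0:
  assumes r: "1 \<le> r" and U: "graded_seq p q U" "\<And>l. Dseq p q U l = 0"
    and c: "graded_seq (p - 1) (q - 1) c"
  shows "delta d r p q (\<lambda>j. if j < r then U j + shift_seq c j else 0) 0
    = Dseq (p - 1) (q - 1) (c(r - 1 := - U r)) (r - 1)"
proof -
  have "delta d r p q (\<lambda>j. if j < r then U j + shift_seq c j else 0) 0
      = Dtrunc r p q (\<lambda>j. if j < r then U j + shift_seq c j else 0) 0"
    using r by (simp add: delta_eq_Dtrunc)
  also have "\<dots> = Dtrunc r p q (\<lambda>j. U j + shift_seq c j) 0"
    by (rule Dtrunc_cong) simp
  also have "\<dots> = Dtrunc r p q U 0 + Dtrunc r p q (shift_seq c) 0"
    by (rule Dtrunc_add[OF U(1) graded_seq_shift[OF c]])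
  also have "\<dots> = - d 0 (p - int r) (q - int r) (U r) + Dtrunc (r - 1) (p - 1) (q - 1) c 0"
  proof -
    have "Dtrunc r p q U 0 = - d 0 (p - int r) (q - int r) (U r)"
      using Dseq_eq_Dtrunc[of p q U r] U(2)[of r] by (simp add: eq_neg_iff_add_eq_0 add.commute)
    moreover have "Dtrunc r p q (shift_seq c) 0 = Dtrunc (r - 1) (p - 1) (q - 1) c 0"
      using Dtrunc_shift[of "r - 1" p q c 0] r by simp
    ultimately show ?thesis by simp
  qed
  also have "\<dots> = Dseq (p - 1) (q - 1) (c(r - 1 := - U r)) (r - 1)"
  proof -
    have "p - 1 - int (r - 1) = p - int r" "q - 1 - int (r - 1) = q - int r"
      using r by (simp_all add: of_nat_diff)
    then show ?thesis
      using graded_seq_mem[OF U(1), of r] by (simp add: Dseq_eq_Dtrunc d_minus)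
  qed
  finally show ?thesis .
qed

lemma delta_w_0_mem_Br:
  assumes x: "x \<in> BW A d r p (q - 1)"
  shows "delta d r p q (w A d r p q x) 0 \<in> Br A d r (p - int r) (q + 1 - int r)"
proof (cases "r = 0")
  case True
  then show ?thesis by (simp add: delta_def Br_zero)
next
  case False
  then have r: "1 \<le> r" by simp
  obtain b a c where xe: "x = (b, a, c)" by (cases x)
  note F = BW_facts[OF r x[unfolded xe]]
  let ?U = "w_core r p q b a"
  have U: "graded_seq p q ?U" "\<And>l. Dseq p q ?U l = 0"
    using w_core_graded[OF r F(1) ZW_graded[OF F(2)]] w_core_cycle[OF r F(1) F(2)] by auto
  have c: "graded_seq (p - 1) (q - 1) c"
    by (rule ZW_graded[OF F(3)])
  have "graded_seq (p - 1) (q - 1) (c(r - 1 := - ?U r))"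
    using graded_seq_mem[OF U(1), of r] r by (intro graded_seq_update[OF c]) (simp add: of_nat_diff A_minus)
  moreover have "Dseq (p - 1) (q - 1) (c(r - 1 := - ?U r)) l = 0" if "l < r - 1" for l
  proof -
    have "Dseq (p - 1) (q - 1) (c(r - 1 := - ?U r)) l = Dseq (p - 1) (q - 1) c l"
      using that by (intro Dseq_cong) simp
    then show ?thesis using that F(3) by (simp add: ZW_iff)
  qed
  moreover have "delta d r p q (w A d r p q x) 0 = Dseq (p - 1) (q - 1) (c(r - 1 := - ?U r)) (r - 1)"
    unfolding xe w_eq[OF r] by (rule delta_core_shift_0[OF r U c])
  ultimately show ?thesis
    using Br_iff[OF r, where P="p - 1" and Q="q - 1" and p="p - int r" and q="q + 1 - int r"] by auto
qed

lemma pi_r_eq: "pi_r A d r p q = (\<lambda>a. ecl A d r p q (a 0))"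
  by (rule ext) (simp add: pi_r_def zr_def)

lemma image_pi_r_ZW: "pi_r A d r p q ` ZW A d r p q = Er A d r p q"
  unfolding Er_def Zr_eq_image_ZW image_image pi_r_eq ..

lemma pi_r_eq_iff:
  assumes a: "a \<in> ZW A d r p q" and a': "a' \<in> ZW A d r p q"
  shows "pi_r A d r p q a = pi_r A d r p q a' \<longleftrightarrow> (\<lambda>k. a k - a' k) \<in> w A d r p q ` BW A d r p (q - 1)"
proof
  assume "pi_r A d r p q a = pi_r A d r p q a'"
  then have "a 0 - a' 0 \<in> Br A d r p q"
    by (simp add: pi_r_eq ecl_eq_iff)
  then show "(\<lambda>k. a k - a' k) \<in> w A d r p q ` BW A d r p (q - 1)"
    using ZW_Br_imp_mem_image_w[OF ZW_diff[OF a a']] by simp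
next
  assume "(\<lambda>k. a k - a' k) \<in> w A d r p q ` BW A d r p (q - 1)"
  then obtain x where x: "x \<in> BW A d r p (q - 1)" and e: "(\<lambda>k. a k - a' k) = w A d r p q x"
    by auto
  have "a 0 - a' 0 = beta d r p q x"
    using fun_cong[OF e, of 0] by (simp add: w_0_eq_beta)
  then show "pi_r A d r p q a = pi_r A d r p q a'"
    using beta_mem_Br[OF x] by (simp add: pi_r_eq ecl_eq_iff)
qed

lemma ker_pi_r:
  "{a \<in> ZW A d r p q. pi_r A d r p q a = ecl A d r p q 0} = w A d r p q ` BW A d r p (q - 1)"
proof -
  have "pi_r A d r p q (\<lambda>_. 0) = ecl A d r p q 0"
    by (simp add: pi_r_eq)
  then have zero: "pi_r A d r p q a = ecl A d r p q 0 \<longleftrightarrow> pi_r A d r p q a = pi_r A d r p q (\<lambda>_. 0)" for a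
    by simp
  show ?thesis
  proof (intro set_eqI iffI)
    fix a assume "a \<in> {a \<in> ZW A d r p q. pi_r A d r p q a = ecl A d r p q 0}"
    then have a: "a \<in> ZW A d r p q" and "pi_r A d r p q a = pi_r A d r p q (\<lambda>_. 0)"
      using zero by auto
    then show "a \<in> w A d r p q ` BW A d r p (q - 1)"
      using pi_r_eq_iff[OF a ZW_zero] by simp
  next
    fix a assume a: "a \<in> w A d r p q ` BW A d r p (q - 1)"
    then have aZ: "a \<in> ZW A d r p q"
      using w_mem_ZW by auto
    then have "pi_r A d r p q a = ecl A d r p q 0"
      using a pi_r_eq_iff[OF aZ ZW_zero] zero by simp
    with aZ show "a \<in> {a \<in> ZW A d r p q. pi_r A d r p q a = ecl A d r p q 0}"
      by simp
  qed
qed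

lemma delta_w_image:
  "delta d r p q ` w A d r p q ` BW A d r p (q - 1)
     \<subseteq> w A d r (p - int r) (q + 1 - int r) ` BW A d r (p - int r) (q - int r)"
proof
  fix y assume "y \<in> delta d r p q ` w A d r p q ` BW A d r p (q - 1)"
  then obtain x where x: "x \<in> BW A d r p (q - 1)" and y: "y = delta d r p q (w A d r p q x)"
    by auto
  have "y \<in> w A d r (p - int r) (q + 1 - int r) ` BW A d r (p - int r) (q + 1 - int r - 1)"
    unfolding y by (rule ZW_Br_imp_mem_image_w[OF delta_ZW[OF w_mem_ZW[OF x]] delta_w_0_mem_Br[OF x]])
  then show "y \<in> w A d r (p - int r) (q + 1 - int r) ` BW A d r (p - int r) (q - int r)"
    by simp
qed

lemma pi_r_delta:
  assumes a: "a \<in> ZW A d r p q"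
  shows "pi_r A d r (p - int r) (q + 1 - int r) (delta d r p q a) = Delta A d r p q (pi_r A d r p q a)"
proof -
  let ?X = "pi_r A d r p q a"
  define a'' where "a'' = (SOME a. a \<in> ZW A d r p q \<and> a 0 \<in> ?X)"
  have "a 0 \<in> ?X"
    unfolding pi_r_eq ecl_def using Br_zero by (auto intro!: image_eqI[of _ _ 0])
  then have "a'' \<in> ZW A d r p q \<and> a'' 0 \<in> ?X"
    unfolding a''_def using someI[where P="\<lambda>a. a \<in> ZW A d r p q \<and> a 0 \<in> ?X" and x=a] a by blast
  then have a'': "a'' \<in> ZW A d r p q" and "a'' 0 - a 0 \<in> Br A d r p q"
    unfolding pi_r_eq ecl_def by auto
  then obtain x where x: "x \<in> BW A d r p (q - 1)" and e: "(\<lambda>k. a'' k - a k) = w A d r p q x"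
    using ZW_Br_imp_mem_image_w[OF ZW_diff[OF a'' a]] by auto
  have "delta d r p q a'' 0 - delta d r p q a 0 \<in> Br A d r (p - int r) (q + 1 - int r)"
    using delta_0_diff[OF a'' a] delta_w_0_mem_Br[OF x] by (simp add: e)
  then have "ecl A d r (p - int r) (q + 1 - int r) (delta d r p q a'' 0)
      = ecl A d r (p - int r) (q + 1 - int r) (delta d r p q a 0)"
    by (simp add: ecl_eq_iff)
  moreover have "Delta A d r p q ?X = ecl A d r (p - int r) (q + 1 - int r) (delta d r p q a'' 0)"
    unfolding Delta_def a''_def[symmetric] Let_def delta_0_eq_sum ..
  ultimately show ?thesis
    by (simp add: pi_r_eq)
qed

end

section \<open>Naturality\<close>

locale mcomplex_hom =
  src: mcomplex scale n A d + tgt: mcomplex scale' n' A' d'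
  for scale :: "'r::comm_ring_1 \<Rightarrow> 'a::ab_group_add \<Rightarrow> 'a" and n A d
    and scale' :: "'r \<Rightarrow> 'b::ab_group_add \<Rightarrow> 'b" and n' A' d' +
  fixes f :: "int \<Rightarrow> int \<Rightarrow> 'a \<Rightarrow> 'b"
  assumes morphism: "mc_morphism scale A d scale' A' d' f"
begin

lemma f_mem: "x \<in> A p q \<Longrightarrow> f p q x \<in> A' p q"
  using morphism by (simp add: mc_morphism_def)

lemma f_add: "x \<in> A p q \<Longrightarrow> y \<in> A p q \<Longrightarrow> f p q (x + y) = f p q x + f p q y"
  using morphism by (simp add: mc_morphism_def)

lemma f_d: "x \<in> A p q \<Longrightarrow> p' = p - int i \<Longrightarrow> q' = q + 1 - int i \<Longrightarrow> f p' q' (d i p q x) = d' i p q (f p q x)"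
  using morphism by (simp add: mc_morphism_def)

lemma f_zero [simp]: "f p q 0 = 0"
  using f_add[of 0 p q 0] by simp

lemma f_minus: "x \<in> A p q \<Longrightarrow> f p q (- x) = - f p q x"
  by (metis add.right_inverse f_add f_zero minus_unique src.A_minus)

lemma f_sg: "x \<in> A p q \<Longrightarrow> f p q (sg j x) = sg j (f p q x)"
  by (simp add: sg_def f_minus)

lemma f_sum: "finite S \<Longrightarrow> (\<And>x. x \<in> S \<Longrightarrow> g x \<in> A p q) \<Longrightarrow> f p q (sum g S) = (\<Sum>x\<in>S. f p q (g x))"
  by (induction S rule: finite_induct) (simp_all add: f_add src.A_sum)

lemma f_sum_sg_d:
  assumes S: "finite S" and x: "\<And>i. i \<in> S \<Longrightarrow> x i \<in> A (P i) (Q i)"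
    and P: "\<And>i. i \<in> S \<Longrightarrow> P0 = P i - int (k i)" and Q: "\<And>i. i \<in> S \<Longrightarrow> Q0 = Q i + 1 - int (k i)"
  shows "f P0 Q0 (\<Sum>i\<in>S. sg (s i) (d (k i) (P i) (Q i) (x i)))
    = (\<Sum>i\<in>S. sg (s i) (d' (k i) (P i) (Q i) (f (P i) (Q i) (x i))))"
proof -
  have m: "d (k i) (P i) (Q i) (x i) \<in> A P0 Q0" if "i \<in> S" for i
    using that by (intro src.d_mem[OF x]) (auto simp: P Q)
  have "f P0 Q0 (\<Sum>i\<in>S. sg (s i) (d (k i) (P i) (Q i) (x i)))
      = (\<Sum>i\<in>S. f P0 Q0 (sg (s i) (d (k i) (P i) (Q i) (x i))))"
    by (rule f_sum[OF S]) (intro src.A_sg m)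
  also have "\<dots> = (\<Sum>i\<in>S. sg (s i) (d' (k i) (P i) (Q i) (f (P i) (Q i) (x i))))"
    using m x P Q by (intro sum.cong refl) (simp add: f_sg f_d)
  finally show ?thesis .
qed

definition map_seq :: "int \<Rightarrow> int \<Rightarrow> (nat \<Rightarrow> 'a) \<Rightarrow> nat \<Rightarrow> 'b" where
  "map_seq P Q s = (\<lambda>j. f (P - int j) (Q - int j) (s j))"

lemma graded_map_seq: "src.graded_seq P Q s \<Longrightarrow> tgt.graded_seq P Q (map_seq P Q s)"
  by (simp add: src.graded_seq_def tgt.graded_seq_def map_seq_def f_mem)

lemma f_Dseq:
  assumes s: "src.graded_seq P Q s" and "P' = P - int l" and "Q' = Q + 1 - int l"
  shows "f P' Q' (src.Dseq P Q s l) = tgt.Dseq P Q (map_seq P Q s) l"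
  unfolding src.Dseq_def tgt.Dseq_def map_seq_def using assms
  by (intro f_sum_sg_d finite_atMost finite_lessThan src.graded_seq_mem[OF s]) (auto simp: of_nat_diff)

lemma f_Dtrunc:
  assumes s: "src.graded_seq P Q s" and "P' = P - int R - int j" and "Q' = Q + 1 - int R - int j"
  shows "f P' Q' (src.Dtrunc R P Q s j) = tgt.Dtrunc R P Q (map_seq P Q s) j"
  unfolding src.Dtrunc_def tgt.Dtrunc_def map_seq_def using assms
  by (intro f_sum_sg_d finite_atMost finite_lessThan src.graded_seq_mem[OF s]) (auto simp: of_nat_diff)

lemma map_seq_shift: "map_seq p q (shift_seq c) = shift_seq (map_seq (p - 1) (q - 1) c)"
proof
  fix j
  show "map_seq p q (shift_seq c) j = shift_seq (map_seq (p - 1) (q - 1) c) j"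
    by (cases j) (simp_all add: map_seq_def shift_seq_def algebra_simps)
qed

lemma ZWmap_eq:
  assumes "a \<in> ZW A d r p q"
  shows "ZWmap f r p q a = map_seq p q a"
proof
  fix k
  have "a k = 0" if "\<not> k < max r 1"
    using assms that unfolding src.ZW_iff not_less by blast
  then show "ZWmap f r p q a k = map_seq p q a k"
    by (simp add: ZWmap_def map_seq_def)
qed

lemma ZWmap_ZW:
  assumes a: "a \<in> ZW A d r p q"
  shows "ZWmap f r p q a \<in> ZW A' d' r p q"
proof -
  have "tgt.Dseq p q (map_seq p q a) l = f (p - int l) (q + 1 - int l) (src.Dseq p q a l)" for l
    by (rule f_Dseq[OF src.ZW_graded[OF a] refl refl, symmetric])
  then show ?thesis
    using a graded_map_seq[OF src.ZW_graded[OF a]]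
    by (simp add: ZWmap_eq tgt.ZW_iff src.ZW_iff map_seq_def)
qed

lemma f_Br:
  assumes y: "y \<in> Br A d r p q"
  shows "f p q y \<in> Br A' d' r p q"
proof (cases "r = 0")
  case True
  then show ?thesis using y by (simp add: Br_def)
next
  case False
  then have r: "1 \<le> r" by simp
  let ?P = "p + int r - 1" and ?Q = "q + int r - 2"
  from y obtain b where b: "src.graded_seq ?P ?Q b" and cyc: "\<forall>l<r - 1. src.Dseq ?P ?Q b l = 0"
    and yb: "y = src.Dseq ?P ?Q b (r - 1)"
    using src.Br_iff[OF r refl refl] by blast
  have "tgt.Dseq ?P ?Q (map_seq ?P ?Q b) l = f (?P - int l) (?Q + 1 - int l) (src.Dseq ?P ?Q b l)" for l
    by (rule f_Dseq[OF b refl refl, symmetric])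
  moreover have "f p q y = tgt.Dseq ?P ?Q (map_seq ?P ?Q b) (r - 1)"
    unfolding yb using r by (intro f_Dseq[OF b]) (simp_all add: of_nat_diff)
  ultimately show ?thesis
    using graded_map_seq[OF b] cyc tgt.Br_iff[OF r refl refl] by auto
qed

lemma Emap_pi_r:
  assumes a: "a \<in> ZW A d r p q"
  shows "Emap A' d' f r p q (pi_r A d r p q a) = pi_r A' d' r p q (ZWmap f r p q a)"
proof -
  let ?X = "ecl A d r p q (a 0)"
  have "a 0 \<in> ?X"
    unfolding ecl_def using src.Br_zero by (auto intro!: image_eqI[of _ _ 0])
  then have "(SOME z. z \<in> ?X) \<in> ?X" by (rule someI)
  then obtain y where y: "y \<in> Br A d r p q" and z: "(SOME z. z \<in> ?X) = a 0 + y"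
    unfolding ecl_def by auto
  have a0: "a 0 \<in> A p q"
    using src.graded_seq_mem[OF src.ZW_graded[OF a], of 0] by simp
  have "Emap A' d' f r p q (pi_r A d r p q a) = ecl A' d' r p q (f p q (a 0) + f p q y)"
    unfolding Emap_def src.pi_r_eq z using f_add[OF a0 src.Br_mem[OF y]] by simp
  also have "\<dots> = ecl A' d' r p q (f p q (a 0))"
    unfolding tgt.ecl_eq_iff using f_Br[OF y] by simp
  also have "\<dots> = pi_r A' d' r p q (ZWmap f r p q a)"
    by (simp add: tgt.pi_r_eq ZWmap_def)
  finally show ?thesis .
qed

lemma map_seq_w_core:
  assumes r: "1 \<le> r" and a: "a \<in> A p (q - 1)" and b: "src.graded_seq (p + int r - 1) (q + int r - 2) b"
  shows "map_seq p q (src.w_core r p q b a)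
    = tgt.w_core r p q (map_seq (p + int r - 1) (q + int r - 2) b) (f p (q - 1) a)"
proof
  fix j
  let ?D = "src.Dtrunc (r - 1) (p + int r - 1) (q + int r - 2) b j"
  have m1: "d j p (q - 1) a \<in> A (p - int j) (q - int j)"
    by (rule src.d_mem[OF a]) simp_all
  have m2: "?D \<in> A (p - int j) (q - int j)"
    using r by (intro src.graded_seq_mem[OF src.Dtrunc_graded[OF b]]) (simp_all add: of_nat_diff)
  have "map_seq p q (src.w_core r p q b a) j = f (p - int j) (q - int j) (d j p (q - 1) a) + f (p - int j) (q - int j) ?D"
    unfolding map_seq_def src.w_core_def by (rule f_add[OF m1 m2])
  also have "f (p - int j) (q - int j) (d j p (q - 1) a) = d' j p (q - 1) (f p (q - 1) a)"
    by (rule f_d[OF a]) simp_all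
  also have "f (p - int j) (q - int j) ?D
      = tgt.Dtrunc (r - 1) (p + int r - 1) (q + int r - 2) (map_seq (p + int r - 1) (q + int r - 2) b) j"
    using r by (intro f_Dtrunc[OF b]) (simp_all add: of_nat_diff)
  finally show "map_seq p q (src.w_core r p q b a) j
      = tgt.w_core r p q (map_seq (p + int r - 1) (q + int r - 2) b) (f p (q - 1) a) j"
    unfolding tgt.w_core_def .
qed

lemma BW_map:
  assumes r: "1 \<le> r" and x: "(b, a, c) \<in> BW A d r p (q - 1)"
  shows "(map_seq (p + int r - 1) (q + int r - 2) b, f p (q - 1) a, map_seq (p - 1) (q - 1) c)
    \<in> BW A' d' r p (q - 1)"
proof (rule tgt.BW_intro[OF r f_mem[OF src.BW_facts(1)[OF r x]]])
  note F = src.BW_facts[OF r x]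
  show "map_seq (p + int r - 1) (q + int r - 2) b \<in> ZW A' d' (r - 1) (p + int r - 1) (q + int r - 2)"
    using ZWmap_ZW[OF F(2)] unfolding ZWmap_eq[OF F(2)] .
  show "map_seq (p - 1) (q - 1) c \<in> ZW A' d' (r - 1) (p - 1) (q - 1)"
    using ZWmap_ZW[OF F(3)] unfolding ZWmap_eq[OF F(3)] .
  show "r = 1 \<Longrightarrow> map_seq (p + int r - 1) (q + int r - 2) b = (\<lambda>_. 0) \<and> map_seq (p - 1) (q - 1) c = (\<lambda>_. 0)"
    using x unfolding src.BW_iff[OF r] by (simp add: map_seq_def)
qed

lemma ZWmap_w:
  assumes r: "1 \<le> r" and x: "(b, a, c) \<in> BW A d r p (q - 1)"
  shows "ZWmap f r p q (w A d r p q (b, a, c))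
    = w A' d' r p q (map_seq (p + int r - 1) (q + int r - 2) b, f p (q - 1) a, map_seq (p - 1) (q - 1) c)"
    (is "_ = w A' d' r p q (?b, ?a, ?c)")
proof -
  note F = src.BW_facts[OF r x]
  have "ZWmap f r p q (w A d r p q (b, a, c)) = map_seq p q (w A d r p q (b, a, c))"
    by (rule ZWmap_eq[OF src.w_mem_ZW[OF x]])
  also have "\<dots> = w A' d' r p q (?b, ?a, ?c)"
  proof
    fix j
    let ?U = "src.w_core r p q b a"
    have U: "?U j \<in> A (p - int j) (q - int j)"
      by (rule src.graded_seq_mem[OF src.w_core_graded[OF r F(1) src.ZW_graded[OF F(2)]]])
    have c: "shift_seq c j \<in> A (p - int j) (q - int j)"
      by (rule src.graded_seq_mem[OF src.graded_seq_shift[OF src.ZW_graded[OF F(3)]]])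
    have "map_seq p q ?U j = tgt.w_core r p q ?b ?a j"
      by (simp only: map_seq_w_core[OF r F(1) src.ZW_graded[OF F(2)]])
    moreover have "map_seq p q (shift_seq c) j = shift_seq ?c j"
      by (simp only: map_seq_shift)
    ultimately show "map_seq p q (w A d r p q (b, a, c)) j = w A' d' r p q (?b, ?a, ?c) j"
      unfolding src.w_eq[OF r] tgt.w_eq[OF r] by (simp add: map_seq_def f_add[OF U c])
  qed
  finally show ?thesis .
qed

lemma ZWmap_w_image:
  assumes x: "x \<in> BW A d r p (q - 1)"
  shows "ZWmap f r p q (w A d r p q x) \<in> w A' d' r p q ` BW A' d' r p (q - 1)"
proof (cases "r = 0")
  case True
  then have "ZWmap f r p q (w A d r p q x) = w A' d' r p q ((\<lambda>_. 0), 0, (\<lambda>_. 0))"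
    by (simp add: ZWmap_def src.w_page_0 tgt.w_page_0 fun_eq_iff)
  then show ?thesis
    using True by (simp add: tgt.BW_page_0)
next
  case False
  then have r: "1 \<le> r" by simp
  obtain b a c where xe: "x = (b, a, c)" by (cases x)
  show ?thesis
    unfolding xe ZWmap_w[OF r x[unfolded xe]] by (rule imageI[OF BW_map[OF r x[unfolded xe]]])
qed

end

context mcomplex
begin

lemma naturality:
  fixes scale' :: "'r \<Rightarrow> 'b::ab_group_add \<Rightarrow> 'b"
  assumes "multicomplex scale' n' A' d'" and "mc_morphism scale A d scale' A' d' f"
  shows "a \<in> ZW A d r p q \<Longrightarrow> ZWmap f r p q a \<in> ZW A' d' r p q"
    and "a \<in> ZW A d r p q \<Longrightarrow>
      Emap A' d' f r p q (pi_r A d r p q a) = pi_r A' d' r p q (ZWmap f r p q a)"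
    and "x \<in> BW A d r p (q - 1) \<Longrightarrow> ZWmap f r p q (w A d r p q x) \<in> w A' d' r p q ` BW A' d' r p (q - 1)"
proof -
  interpret mcomplex_hom scale n A d scale' n' A' d' f
    using multicomplex assms by (simp add: mcomplex_hom_def mcomplex_hom_axioms_def mcomplex_def)
  show "a \<in> ZW A d r p q \<Longrightarrow> ZWmap f r p q a \<in> ZW A' d' r p q"
    by (rule ZWmap_ZW)
  show "a \<in> ZW A d r p q \<Longrightarrow>
      Emap A' d' f r p q (pi_r A d r p q a) = pi_r A' d' r p q (ZWmap f r p q a)"
    by (rule Emap_pi_r)
  show "x \<in> BW A d r p (q - 1) \<Longrightarrow> ZWmap f r p q (w A d r p q x) \<in> w A' d' r p q ` BW A' d' r p (q - 1)"
    by (rule ZWmap_w_image)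
qed

end

theorem mainTheorem1:
  fixes scale :: "'r::comm_ring_1 \<Rightarrow> 'a::ab_group_add \<Rightarrow> 'a"
    and A :: "int \<Rightarrow> int \<Rightarrow> 'a set" and d :: "nat \<Rightarrow> int \<Rightarrow> int \<Rightarrow> 'a \<Rightarrow> 'a"
    and n :: enat and r :: nat and p q :: int
  assumes n2: "2 \<le> n"
    and mc: "multicomplex scale n A d"
  shows
    "pi_r A d r p q ` ZW A d r p q = Er A d r p q \<and>
     {a \<in> ZW A d r p q. pi_r A d r p q a = ecl A d r p q 0} = w A d r p q ` BW A d r p (q - 1) \<and>
     (\<forall>x \<in> BW A d r p (q - 1). w A d r p q x \<in> ZW A d r p q \<and>
        zr (w A d r p q x) = beta d r p q x \<and> beta d r p q x \<in> Br A d r p q) \<and>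
     (\<forall>a \<in> ZW A d r p q. \<forall>a' \<in> ZW A d r p q.
        pi_r A d r p q a = pi_r A d r p q a' \<longleftrightarrow> (\<lambda>k. a k - a' k) \<in> w A d r p q ` BW A d r p (q - 1)) \<and>
     (\<forall>(scale' :: 'r \<Rightarrow> 'b::ab_group_add \<Rightarrow> 'b) n' A' d' f.
       multicomplex scale' n' A' d' \<and> 2 \<le> n' \<and> mc_morphism scale A d scale' A' d' f \<longrightarrow>
       (\<forall>a \<in> ZW A d r p q. ZWmap f r p q a \<in> ZW A' d' r p q \<and>
           Emap A' d' f r p q (pi_r A d r p q a) = pi_r A' d' r p q (ZWmap f r p q a)) \<and>
       ZWmap f r p q ` w A d r p q ` BW A d r p (q - 1) \<subseteq> w A' d' r p q ` BW A' d' r p (q - 1)) \<and>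
     (\<forall>a \<in> ZW A d r p q. delta d r p q a \<in> ZW A d r (p - int r) (q + 1 - int r)) \<and>
     delta d r p q ` w A d r p q ` BW A d r p (q - 1)
       \<subseteq> w A d r (p - int r) (q + 1 - int r) ` BW A d r (p - int r) (q - int r) \<and>
     (\<forall>a \<in> ZW A d r p q.
        pi_r A d r (p - int r) (q + 1 - int r) (delta d r p q a) = Delta A d r p q (pi_r A d r p q a))"
proof -
  interpret mcomplex scale n A d
    by (rule mcomplex.intro) (rule mc)
  show ?thesis
    unfolding zr_def using image_pi_r_ZW ker_pi_r delta_w_image
    by (intro conjI ballI allI impI w_mem_ZW w_0_eq_beta beta_mem_Br pi_r_eq_iff delta_ZW pi_r_delta)
       (auto simp: naturality)
qed

end
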